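(* Let $p$ be a prime, $n\geq1$, and let $f\in\mathcal{Q}_n$ have degree $m\geq1$. Then for each $1\leq k\leq m$ there exists $q_k\in\mathbb{Z}[X]$ of degree $m-k$ such that $$f(X)=q_k(X)G_k(X)+R_{k-1}(X),\qquad R_{k-1}(X)=f(0)+\sum_{h=1}^{k-1}q_h(hp)G_h(X),$$ and $q_k(X)=q_{k+1}(X)(X-kp)+q_k(kp)$ for $k=1,\dots,m-1$. Moreover, for each such $k$: (i) if $v_p((pk)!)<n$, then $p^{\,n-v_p((pk)!)}$ divides $q_k(kp)$; (ii) $q_k(kp)G_k(X)\in\mathcal{Q}_n$, and if $k<p$ then $q_k(kp)G_k(X)\in\mathcal{M}^n$; (iii) $R_{k-1}\in\mathcal{Q}_n$ for all $k=1,\dots,m$, and $R_{k-1}\in\mathcal{M}^n$ for all $k$ with $1\leq k\leq\min(m,p)$.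
   Context: Fix a prime $p$ and $n\geq 1$. $\mathcal{M}=(p,X)\subseteq\mathbb{Z}[X]$ and $\mathcal{Q}_n=\bigcap_{i\in\{0,\dots,p^n-1\},\ p\mid i}(p^n,X-i)$, i.e. the set of $f\in\mathbb{Z}[X]$ with $p^n\mid f(i)$ for every integer $i$ divisible by $p$. For $k\geq1$, $G_k(X)=\prod_{h=0}^{k-1}(X-hp)$, and $G_0(X)=1$. $v_p$ denotes the $p$-adic valuation. *)

theory Defs
  imports "HOL-Computational_Algebra.Computational_Algebra"
begin

definition G :: "nat \<Rightarrow> nat \<Rightarrow> int poly" where
  "G p k = (\<Prod>h<k. [:- (int h * int p), 1:])"

definition Qset :: "nat \<Rightarrow> nat \<Rightarrow> int poly set" where
  "Qset p n = {f. \<forall>i::int. int p dvd i \<longrightarrow> int p ^ n dvd poly f i}"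

text \<open>M^n, the n-th power of the ideal M = (p, X) of Z[X]; it is the ideal generated by
  the products p^(n-j) X^j, j = 0..n, of n generators of M.\<close>
definition Mpow :: "nat \<Rightarrow> nat \<Rightarrow> int poly set" where
  "Mpow p n = {f. \<exists>g :: nat \<Rightarrow> int poly.
      f = (\<Sum>j\<le>n. smult (int p ^ (n - j)) (monom 1 j * g j))}"

end

theory Submission
  imports Defs
begin

text \<open>Successive synthetic division of \<open>f\<close> by \<open>X - kp\<close> produces the quotients \<open>q_k\<close> and the
  Newton expansion \<open>f = \<Sum>\<^sub>h c\<^sub>h G\<^sub>h\<close> with \<open>c\<^sub>h = q\<^sub>h(hp)\<close>. The \<open>h\<close>-th forward difference with
  step \<open>p\<close>, evaluated at \<open>0\<close>, annihilates every \<open>G\<^sub>j\<close> with \<open>j \<noteq> h\<close> and sends \<open>G\<^sub>h\<close> to \<open>h! p\<^sup>h\<close>;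
  as it only involves values of \<open>f\<close> at multiples of \<open>p\<close>, membership \<open>f \<in> Q\<^sub>n\<close> gives
  \<open>p\<^sup>n | c\<^sub>h h! p\<^sup>h\<close>. The rest follows: \<open>h! p\<^sup>h\<close> divides \<open>(ph)!\<close>, \<open>h!\<close> is prime to \<open>p\<close> for
  \<open>h < p\<close>, and \<open>G\<^sub>h(pj) = p\<^sup>h j(j-1)\<cdots>(j-h+1)\<close> is divisible by \<open>h! p\<^sup>h\<close>.\<close>

lemma poly_G: "poly (G p k) x = (\<Prod>h<k. x - int h * int p)"
  by (simp add: G_def poly_prod)

lemma G_Suc: "G p (Suc k) = G p k * [:- (int k * int p), 1:]"
  by (simp add: G_def)

lemma poly_G_multiple: "poly (G p k) (int p * j) = int p ^ k * poly (G 1 k) j"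
proof -
  have "poly (G p k) (int p * j) = (\<Prod>h<k. int p * (j - int h))"
    unfolding poly_G by (simp add: algebra_simps)
  then show ?thesis
    unfolding poly_G by (simp add: prod.distrib)
qed

lemma fact_dvd_poly_G_1: "fact k dvd poly (G 1 k) j"
proof -
  have "poly (G 1 k) j = pochhammer (j - int k + 1) k"
    by (simp add: poly_G atLeast0LessThan flip: falling_fact_pochhammer')
  then show ?thesis by (simp add: fact_dvd_pochhammer)
qed

definition fwd_diff :: "int \<Rightarrow> (int \<Rightarrow> int) \<Rightarrow> int \<Rightarrow> int" where
  "fwd_diff d g x = g (x + d) - g x"

lemma fwd_diff_poly_G:
  "fwd_diff (int p) (poly (G p k)) x = int k * int p * poly (G p (k - 1)) x"
proof (cases k)
  case 0
  then show ?thesis by (simp add: fwd_diff_def G_def)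
next
  case (Suc j)
  have "poly (G p (Suc j)) (x + int p)
      = (x + int p - int 0 * int p) * (\<Prod>h<j. x + int p - int (Suc h) * int p)"
    unfolding poly_G by (rule prod.lessThan_Suc_shift)
  also have "\<dots> = (x + int p) * poly (G p j) x"
    by (simp add: poly_G algebra_simps)
  finally have "poly (G p (Suc j)) (x + int p) = (x + int p) * poly (G p j) x" .
  moreover have "poly (G p (Suc j)) x = poly (G p j) x * (x - int j * int p)"
    by (simp add: G_Suc algebra_simps)
  ultimately show ?thesis
    using Suc by (simp add: fwd_diff_def algebra_simps)
qed

lemma funpow_fwd_diff_poly_G:
  "(fwd_diff (int p) ^^ k) (poly (G p h)) x
     = (\<Prod>i<k. int h - int i) * int p ^ k * poly (G p (h - k)) x"
proof (induction k arbitrary: x)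
  case 0
  then show ?case by simp
next
  case (Suc k)
  have "(fwd_diff (int p) ^^ Suc k) (poly (G p h)) x
      = (\<Prod>i<k. int h - int i) * int p ^ k * fwd_diff (int p) (poly (G p (h - k))) x"
    unfolding funpow.simps comp_apply
      fwd_diff_def[of "int p" "(fwd_diff (int p) ^^ k) (poly (G p h))"] Suc.IH
    by (simp add: fwd_diff_def algebra_simps)
  also have "\<dots> = (\<Prod>i<k. int h - int i) * int (h - k) * int p ^ Suc k * poly (G p (h - Suc k)) x"
    by (simp add: fwd_diff_poly_G)
  also have "(\<Prod>i<k. int h - int i) * int (h - k) = (\<Prod>i<Suc k. int h - int i)"
    by (cases "k \<le> h") (auto simp: of_nat_diff intro!: prod_zero)
  finally show ?case .
qed

lemma funpow_fwd_diff_poly_G_at_0: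
  "(fwd_diff (int p) ^^ k) (poly (G p h)) 0 = (if h = k then fact k * int p ^ k else 0)"
proof -
  consider "h < k" | "h = k" | "h > k" by linarith
  then show ?thesis
  proof cases
    case 1
    then show ?thesis by (auto simp: funpow_fwd_diff_poly_G intro!: prod_zero)
  next
    case 2
    have "(\<Prod>i<k. int k - int i) = fact k"
      by (simp add: fact_prod_rev atLeast0LessThan of_nat_diff of_nat_prod)
    moreover have "G p 0 = 1"
      by (simp add: G_def)
    ultimately show ?thesis
      using 2 by (simp add: funpow_fwd_diff_poly_G)
  next
    case 3
    then have "poly (G p (h - k)) 0 = 0"
      unfolding poly_G by (intro prod_zero) auto
    with 3 show ?thesis by (simp add: funpow_fwd_diff_poly_G)
  qed
qed

lemma funpow_fwd_diff_sum:
  "(fwd_diff d ^^ k) (\<lambda>x. \<Sum>i\<in>A. c i * g i x) = (\<lambda>x. \<Sum>i\<in>A. c i * (fwd_diff d ^^ k) (g i) x)"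
  by (induction k) (simp_all add: fwd_diff_def sum_subtractf[symmetric] algebra_simps)

lemma funpow_fwd_diff_dvd:
  assumes "\<And>i. d dvd i \<Longrightarrow> r dvd g i" and "d dvd x"
  shows "r dvd (fwd_diff d ^^ k) g x"
  using assms(2) by (induction k arbitrary: x) (simp_all add: fwd_diff_def assms(1))

primrec newton_quotient :: "nat \<Rightarrow> int poly \<Rightarrow> nat \<Rightarrow> int poly" where
  "newton_quotient p f 0 = f"
| "newton_quotient p f (Suc k) = synthetic_div (newton_quotient p f k) (int k * int p)"

definition newton_coeff :: "nat \<Rightarrow> int poly \<Rightarrow> nat \<Rightarrow> int" where
  "newton_coeff p f k = poly (newton_quotient p f k) (int k * int p)"

definition newton_remainder :: "nat \<Rightarrow> int poly \<Rightarrow> nat \<Rightarrow> int poly" where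
  "newton_remainder p f k = (\<Sum>h<k. smult (newton_coeff p f h) (G p h))"

lemma newton_quotient_eq_Suc:
  "newton_quotient p f k
     = newton_quotient p f (Suc k) * [:- (int k * int p), 1:] + [:newton_coeff p f k:]"
  using synthetic_div_correct'[of "int k * int p" "newton_quotient p f k"]
  by (simp add: newton_coeff_def mult.commute)

lemma degree_newton_quotient: "degree (newton_quotient p f k) = degree f - k"
  by (induction k) (simp_all add: degree_synthetic_div)

lemma newton_expansion: "f = newton_quotient p f k * G p k + newton_remainder p f k"
proof (induction k)
  case 0
  then show ?case by (simp add: G_def newton_remainder_def)
next
  case (Suc k)
  then show ?case
    by (subst (asm) newton_quotient_eq_Suc) (simp add: G_Suc newton_remainder_def algebra_simps)
qed

lemma newton_remainder_Suc:
  "newton_remainder p f (Suc j)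
     = [:poly f 0:] + (\<Sum>h\<in>{1..j}. smult (newton_coeff p f h) (G p h))"
proof (induction j)
  case 0
  then show ?case by (simp add: newton_remainder_def newton_coeff_def G_def)
next
  case (Suc j)
  then show ?case by (simp add: newton_remainder_def add.assoc)
qed

lemma poly_newton_expansion:
  "poly f x = (\<Sum>h\<le>degree f. newton_coeff p f h * poly (G p h) x)"
proof -
  let ?m = "degree f"
  have "degree (newton_quotient p f ?m) = 0"
    by (simp add: degree_newton_quotient)
  then have "newton_quotient p f ?m = [:newton_coeff p f ?m:]"
    unfolding newton_coeff_def by (metis degree_eq_zeroE poly_const_conv)
  then have "f = (\<Sum>h<Suc ?m. smult (newton_coeff p f h) (G p h))"
    using newton_expansion[of f p ?m] by (simp add: newton_remainder_def add.commute)
  then have "poly f x = poly (\<Sum>h<Suc ?m. smult (newton_coeff p f h) (G p h)) x"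
    by (rule arg_cong)
  then show ?thesis
    by (simp add: poly_sum lessThan_Suc_atMost)
qed

lemma newton_coeff_fact_dvd:
  assumes "f \<in> Qset p n" and "k \<le> degree f"
  shows "int p ^ n dvd newton_coeff p f k * fact k * int p ^ k"
proof -
  have "int p ^ n dvd (fwd_diff (int p) ^^ k) (poly f) 0"
    using assms(1) by (intro funpow_fwd_diff_dvd) (auto simp: Qset_def)
  also have "poly f = (\<lambda>x. \<Sum>h\<le>degree f. newton_coeff p f h * poly (G p h) x)"
    by (rule ext) (rule poly_newton_expansion)
  also have "(fwd_diff (int p) ^^ k) \<dots> 0
      = (\<Sum>h\<le>degree f. if h = k then newton_coeff p f k * (fact k * int p ^ k) else 0)"
    unfolding funpow_fwd_diff_sum funpow_fwd_diff_poly_G_at_0 by (rule sum.cong) auto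
  finally show ?thesis
    using assms(2) by (simp add: mult.assoc)
qed

lemma prime_power_dvd_mult_cancel:
  fixes c :: int and x :: nat
  assumes "prime p" and "x \<noteq> 0" and "int p ^ n dvd c * int x"
  shows "int p ^ (n - multiplicity p x) dvd c"
proof (cases "multiplicity p x < n")
  case False
  then show ?thesis by simp
next
  case True
  let ?v = "multiplicity p x"
  obtain u where u: "x = p ^ ?v * u" "\<not> p dvd u"
    using assms(1,2) by (metis multiplicity_decompose' not_prime_unit)
  have "int p ^ (n - ?v) * int p ^ ?v = int p ^ n"
    using True by (simp flip: power_add)
  moreover have "c * int x = (c * int u) * int p ^ ?v"
    by (subst u(1)) (simp add: algebra_simps)
  ultimately have "int p ^ (n - ?v) * int p ^ ?v dvd (c * int u) * int p ^ ?v"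
    using assms(3) by metis
  then have "int p ^ (n - ?v) dvd c * int u"
    using assms(1) by (simp add: prime_gt_0_nat)
  moreover have "coprime (int p ^ (n - ?v)) (int u)"
    using assms(1) u(2) by (simp add: prime_imp_coprime)
  ultimately show ?thesis
    using coprime_dvd_mult_left_iff by blast
qed

lemma fact_mult_power_dvd_fact:
  assumes "p > 0"
  shows "fact k * p ^ k dvd (fact (p * k) :: nat)"
proof (induction k)
  case 0
  then show ?case by simp
next
  case (Suc k)
  have "fact (p * k) dvd (fact (p * Suc k - 1) :: nat)"
    using assms by (intro fact_dvd) simp
  with Suc.IH have "(fact k * p ^ k) * (p * Suc k) dvd fact (p * Suc k - 1) * (p * Suc k)"
    by (intro mult_dvd_mono) (auto intro: dvd_trans)
  moreover have "fact (p * Suc k) = (fact (p * Suc k - 1) :: nat) * (p * Suc k)"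
    using assms by (subst fact_reduce) (auto simp: mult.commute)
  ultimately show ?case
    by (simp add: algebra_simps)
qed

lemma multiplicity_fact_mult_power:
  assumes "prime p" and "k < p"
  shows "multiplicity p (fact k * p ^ k :: nat) = k"
proof -
  have "\<not> p dvd fact k"
    using assms by (simp add: prime_dvd_fact_iff)
  then show ?thesis
    using assms(1) by (simp add: prime_elem_multiplicity_mult_distrib not_dvd_imp_multiplicity_0)
qed

lemma newton_coeff_dvd_fact_mult_power:
  assumes "prime p" and "f \<in> Qset p n" and "k \<le> degree f"
  shows "int p ^ (n - multiplicity p (fact k * p ^ k :: nat)) dvd newton_coeff p f k"
  using assms(1) newton_coeff_fact_dvd[OF assms(2,3)]
  by (intro prime_power_dvd_mult_cancel) (auto simp: prime_gt_0_nat mult.assoc)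

lemma newton_coeff_dvd_fact:
  assumes "prime p" and "f \<in> Qset p n" and "k \<le> degree f"
  shows "int p ^ (n - multiplicity p (fact (p * k) :: nat)) dvd newton_coeff p f k"
proof -
  have "multiplicity p (fact k * p ^ k :: nat) \<le> multiplicity p (fact (p * k) :: nat)"
    using assms(1) by (intro dvd_imp_multiplicity_le fact_mult_power_dvd_fact) (auto simp: prime_gt_0_nat)
  then have "int p ^ (n - multiplicity p (fact (p * k) :: nat))
      dvd int p ^ (n - multiplicity p (fact k * p ^ k :: nat))"
    by (intro le_imp_power_dvd) linarith
  then show ?thesis
    using newton_coeff_dvd_fact_mult_power[OF assms] by (rule dvd_trans)
qed

lemma newton_coeff_dvd_below_prime:
  assumes "prime p" and "f \<in> Qset p n" and "k \<le> degree f" and "k < p"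
  shows "int p ^ (n - k) dvd newton_coeff p f k"
  using newton_coeff_dvd_fact_mult_power[OF assms(1-3)] multiplicity_fact_mult_power[OF assms(1,4)] by simp

lemma Qset_sum: "(\<And>i. i \<in> A \<Longrightarrow> f i \<in> Qset p n) \<Longrightarrow> (\<Sum>i\<in>A. f i) \<in> Qset p n"
  by (induction A rule: infinite_finite_induct) (simp_all add: Qset_def)

lemma newton_term_in_Qset:
  assumes "f \<in> Qset p n" and "k \<le> degree f"
  shows "smult (newton_coeff p f k) (G p k) \<in> Qset p n"
  unfolding Qset_def
proof safe
  fix i :: int
  assume "int p dvd i"
  then obtain j where i: "i = int p * j" ..
  let ?c = "newton_coeff p f k"
  have "?c * fact k * int p ^ k dvd ?c * int p ^ k * poly (G 1 k) j"
    using fact_dvd_poly_G_1[of k j] by (simp add: mult_dvd_mono algebra_simps)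
  with newton_coeff_fact_dvd[OF assms] have "int p ^ n dvd ?c * int p ^ k * poly (G 1 k) j"
    by (rule dvd_trans)
  then show "int p ^ n dvd poly (smult ?c (G p k)) i"
    by (simp add: i poly_G_multiple mult.assoc)
qed

lemma newton_remainder_in_Qset:
  assumes "f \<in> Qset p n" and "k \<le> Suc (degree f)"
  shows "newton_remainder p f k \<in> Qset p n"
  unfolding newton_remainder_def using assms by (intro Qset_sum newton_term_in_Qset) auto

text \<open>The polynomials whose \<open>j\<close>-th coefficient is divisible by \<open>p^(n-j)\<close>; this set is
  \<open>M^n\<close>, but only its inclusion into \<open>Mpow\<close> is needed.\<close>
definition Mcoeff :: "nat \<Rightarrow> nat \<Rightarrow> int poly set" where
  "Mcoeff p n = {f. \<forall>j. int p ^ (n - j) dvd coeff f j}"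

lemma Mcoeff_antimono:
  assumes "f \<in> Mcoeff p b" and "a \<le> b"
  shows "f \<in> Mcoeff p a"
  unfolding Mcoeff_def
proof safe
  fix j
  have "int p ^ (a - j) dvd int p ^ (b - j)"
    using assms(2) by (intro le_imp_power_dvd) simp
  then show "int p ^ (a - j) dvd coeff f j"
    using assms(1) unfolding Mcoeff_def by (blast intro: dvd_trans)
qed

lemma Mcoeff_sum: "(\<And>i. i \<in> A \<Longrightarrow> f i \<in> Mcoeff p n) \<Longrightarrow> (\<Sum>i\<in>A. f i) \<in> Mcoeff p n"
  by (induction A rule: infinite_finite_induct) (simp_all add: Mcoeff_def)

lemma Mcoeff_mult:
  assumes "f \<in> Mcoeff p a" and "g \<in> Mcoeff p b"
  shows "f * g \<in> Mcoeff p (a + b)"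
  unfolding Mcoeff_def
proof safe
  fix j
  show "int p ^ (a + b - j) dvd coeff (f * g) j"
    unfolding coeff_mult
  proof (rule dvd_sum)
    fix i assume "i \<in> {..j}"
    then have "int p ^ (a + b - j) dvd int p ^ (a - i) * int p ^ (b - (j - i))"
      by (simp add: le_imp_power_dvd flip: power_add)
    also have "\<dots> dvd coeff f i * coeff g (j - i)"
      using assms by (simp add: Mcoeff_def mult_dvd_mono)
    finally show "int p ^ (a + b - j) dvd coeff f i * coeff g (j - i)" .
  qed
qed

lemma const_in_Mcoeff: "int p ^ n dvd c \<Longrightarrow> [:c:] \<in> Mcoeff p n"
  unfolding Mcoeff_def by (auto simp: coeff_pCons split: nat.splits)

lemma G_in_Mcoeff: "G p k \<in> Mcoeff p k"
proof (induction k)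
  case 0
  then show ?case by (simp add: G_def Mcoeff_def)
next
  case (Suc k)
  have "[:- (int k * int p), 1:] \<in> Mcoeff p 1"
    unfolding Mcoeff_def by (auto simp: coeff_pCons split: nat.splits)
  from Mcoeff_mult[OF Suc this] show ?case by (simp add: G_Suc)
qed

lemma Mcoeff_subset_Mpow: "Mcoeff p n \<subseteq> Mpow p n"
proof
  fix f
  assume f: "f \<in> Mcoeff p n"
  \<comment> \<open>the coefficients below degree \<open>n\<close> go to the generators \<open>p^(n-j) X^j\<close>, the rest to \<open>X^n\<close>\<close>
  define g where "g j = (if j < n then [:coeff f j div int p ^ (n - j):] else poly_shift n f)" for j
  have "f = (\<Sum>j\<le>n. smult (int p ^ (n - j)) (monom 1 j * g j))"
  proof (rule poly_eqI)
    fix i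
    let ?t = "\<lambda>j. int p ^ (n - j) * (if i < j then 0 else coeff (g j) (i - j))"
    have "coeff (\<Sum>j\<le>n. smult (int p ^ (n - j)) (monom 1 j * g j)) i = sum ?t (insert n {..<n})"
      by (simp add: coeff_sum coeff_monom_mult lessThan_Suc_atMost[symmetric] lessThan_Suc
          cong: if_cong)
    also have "\<dots> = (if i < n then 0 else coeff f i) + (\<Sum>j<n. if j = i then coeff f i else 0)"
    proof -
      have "?t j = (if j = i then coeff f i else 0)" if "j < n" for j
        using that f unfolding Mcoeff_def by (auto simp: g_def coeff_pCons split: nat.splits)
      then show ?thesis
        by (simp add: g_def coeff_poly_shift)
    qed
    also have "\<dots> = coeff f i"
      by simp
    finally show "coeff f i = coeff (\<Sum>j\<le>n. smult (int p ^ (n - j)) (monom 1 j * g j)) i"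
      by simp
  qed
  then show "f \<in> Mpow p n"
    unfolding Mpow_def by blast
qed

lemma newton_term_in_Mcoeff:
  assumes "prime p" and "f \<in> Qset p n" and "k \<le> degree f" and "k < p"
  shows "smult (newton_coeff p f k) (G p k) \<in> Mcoeff p n"
proof -
  have "[:newton_coeff p f k:] * G p k \<in> Mcoeff p (n - k + k)"
    using newton_coeff_dvd_below_prime[OF assms]
    by (intro Mcoeff_mult const_in_Mcoeff G_in_Mcoeff)
  then show ?thesis
    by (auto intro: Mcoeff_antimono)
qed

lemma newton_remainder_in_Mcoeff:
  assumes "prime p" and "f \<in> Qset p n" and "k \<le> Suc (degree f)" and "k \<le> p"
  shows "newton_remainder p f k \<in> Mcoeff p n"
  unfolding newton_remainder_def using assms by (intro Mcoeff_sum newton_term_in_Mcoeff) auto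

theorem mainTheorem11:
  fixes p n m :: nat and f :: "int poly"
  assumes "prime p" and "n \<ge> 1" and "f \<in> Qset p n"
    and "degree f = m" and "m \<ge> 1"
  shows "\<exists>q :: nat \<Rightarrow> int poly.
    let R = (\<lambda>j. [:poly f 0:] + (\<Sum>h\<in>{1..j}. smult (poly (q h) (int h * int p)) (G p h)))
    in (\<forall>k\<in>{1..m}. degree (q k) = m - k \<and> f = q k * G p k + R (k - 1))
     \<and> (\<forall>k\<in>{1..m - 1}. q k = q (Suc k) * [:- (int k * int p), 1:] + [:poly (q k) (int k * int p):])
     \<and> (\<forall>k\<in>{1..m}.
          (multiplicity p (fact (p * k)) < n \<longrightarrow>
             int p ^ (n - multiplicity p (fact (p * k))) dvd poly (q k) (int k * int p))
        \<and> smult (poly (q k) (int k * int p)) (G p k) \<in> Qset p n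
        \<and> (k < p \<longrightarrow> smult (poly (q k) (int k * int p)) (G p k) \<in> Mpow p n))
     \<and> (\<forall>k\<in>{1..m}. R (k - 1) \<in> Qset p n)
     \<and> (\<forall>k\<in>{1..min m p}. R (k - 1) \<in> Mpow p n)"
proof -
  have R: "[:poly f 0:] + (\<Sum>h\<in>{1..k - 1}. smult (newton_coeff p f h) (G p h))
      = newton_remainder p f k" if "k \<ge> 1" for k
    using that newton_remainder_Suc[of p f "k - 1"] by simp
  show ?thesis
  proof (rule exI[of _ "newton_quotient p f"], unfold Let_def newton_coeff_def[symmetric],
      intro conjI ballI)
    fix k
    assume k: "k \<in> {1..m}"
    then have "k \<le> degree f" and "k \<ge> 1"
      using assms(4) by auto
    show "degree (newton_quotient p f k) = m - k"
      using assms(4) by (simp add: degree_newton_quotient)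
    show "f = newton_quotient p f k * G p k
        + ([:poly f 0:] + (\<Sum>h\<in>{1..k - 1}. smult (newton_coeff p f h) (G p h)))"
      using newton_expansion[of f p k] R[OF \<open>k \<ge> 1\<close>] by simp
    show "multiplicity p (fact (p * k)) < n \<longrightarrow>
        int p ^ (n - multiplicity p (fact (p * k))) dvd newton_coeff p f k"
      using newton_coeff_dvd_fact[OF assms(1,3) \<open>k \<le> degree f\<close>] by simp
    show "smult (newton_coeff p f k) (G p k) \<in> Qset p n"
      using newton_term_in_Qset[OF assms(3) \<open>k \<le> degree f\<close>] .
    show "k < p \<longrightarrow> smult (newton_coeff p f k) (G p k) \<in> Mpow p n"
      using newton_term_in_Mcoeff[OF assms(1,3) \<open>k \<le> degree f\<close>] Mcoeff_subset_Mpow by blast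
    show "[:poly f 0:] + (\<Sum>h\<in>{1..k - 1}. smult (newton_coeff p f h) (G p h)) \<in> Qset p n"
      using newton_remainder_in_Qset[OF assms(3), of k] R[OF \<open>k \<ge> 1\<close>] \<open>k \<le> degree f\<close> by simp
  next
    fix k
    show "newton_quotient p f k
        = newton_quotient p f (Suc k) * [:- (int k * int p), 1:] + [:newton_coeff p f k:]"
      by (rule newton_quotient_eq_Suc)
  next
    fix k
    assume k: "k \<in> {1..min m p}"
    then have "newton_remainder p f k \<in> Mcoeff p n"
      using assms(4) by (intro newton_remainder_in_Mcoeff[OF assms(1,3)]) auto
    then show "[:poly f 0:] + (\<Sum>h\<in>{1..k - 1}. smult (newton_coeff p f h) (G p h)) \<in> Mpow p n"
      using Mcoeff_subset_Mpow R k by auto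
  qed
qed

end
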